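(* Let $G,H$ be graphs, let $a,b$ be vertices of $G$, and let $\alpha,\beta,\gamma,\kappa$ be vertices of $H$. There is perfect state transfer between the pair state of $\{(a,\alpha),(a,\beta)\}$ and the pair state of $\{(b,\gamma),(b,\kappa)\}$ in the Cartesian product $G\square H$ at time $t$ if and only if both: (i) there is perfect Laplacian vertex state transfer between $a$ and $b$ in $G$ at time $t$; and (ii) there is perfect pair state transfer between $e_\alpha-e_\beta$ and $e_\gamma-e_\kappa$ in $H$ at time $t$.
   Context: All graphs are finite and simple. The Cartesian product $G\square H$ has vertex set $V(G)\times V(H)$, with $(g_1,h_1)\sim(g_2,h_2)$ iff either $g_1=g_2$ and $h_1\sim h_2$ in $H$, or $g_1\sim g_2$ in $G$ and $h_1=h_2$. For a graph $X$ with Laplacian $L=\Delta-A$, set $U_X(t)=\exp(itL)$. Perfect pair state transfer between $e_x-e_y$ and $e_z-e_w$ at time $t$ means $U_X(t)(e_x-e_y)=\gamma(e_z-e_w)$ for some $\gamma\in\mathbb{C}$, $|\gamma|=1$; the pair state of a pair $\{x,y\}$ is $e_x-e_y$. Perfect Laplacian vertex state transfer between vertices $a,b$ at time $t$ means $U_X(t)e_a=\gamma e_b$ for some $|\gamma|=1$. *)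

theory Defs
  imports "HOL-Analysis.Analysis"
begin

definition simple_graph :: "('v::finite \<Rightarrow> 'v \<Rightarrow> bool) \<Rightarrow> bool" where
  "simple_graph E \<longleftrightarrow> (\<forall>x y. E x y \<longrightarrow> E y x) \<and> (\<forall>x. \<not> E x x)"

definition cart_prod :: "('a \<Rightarrow> 'a \<Rightarrow> bool) \<Rightarrow> ('b \<Rightarrow> 'b \<Rightarrow> bool) \<Rightarrow> ('a \<times> 'b) \<Rightarrow> ('a \<times> 'b) \<Rightarrow> bool" where
  "cart_prod E F p q \<longleftrightarrow> (fst p = fst q \<and> F (snd p) (snd q)) \<or> (E (fst p) (fst q) \<and> snd p = snd q)"

type_synonym 'v mat = "'v \<Rightarrow> 'v \<Rightarrow> complex"

definition mat_mult :: "'v::finite mat \<Rightarrow> 'v mat \<Rightarrow> 'v mat" where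
  "mat_mult A B = (\<lambda>x y. \<Sum>z\<in>UNIV. A x z * B z y)"

definition mat_id :: "'v mat" where
  "mat_id = (\<lambda>x y. if x = y then 1 else 0)"

primrec mat_pow :: "'v::finite mat \<Rightarrow> nat \<Rightarrow> 'v mat" where
  "mat_pow A 0 = mat_id"
| "mat_pow A (Suc n) = mat_mult (mat_pow A n) A"

definition mat_exp :: "'v::finite mat \<Rightarrow> 'v mat" where
  "mat_exp A = (\<lambda>x y. \<Sum>n. mat_pow A n x y / of_nat (fact n))"

definition mat_vec :: "'v::finite mat \<Rightarrow> ('v \<Rightarrow> complex) \<Rightarrow> ('v \<Rightarrow> complex)" where
  "mat_vec A v = (\<lambda>x. \<Sum>y\<in>UNIV. A x y * v y)"

definition laplacian :: "('v::finite \<Rightarrow> 'v \<Rightarrow> bool) \<Rightarrow> 'v mat" where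
  "laplacian E = (\<lambda>x y. (if x = y then of_nat (card {z. E x z}) else 0) - (if E x y then 1 else 0))"

definition U :: "('v::finite \<Rightarrow> 'v \<Rightarrow> bool) \<Rightarrow> real \<Rightarrow> 'v mat" where
  "U E t = mat_exp (\<lambda>x y. \<i> * complex_of_real t * laplacian E x y)"

definition e_vec :: "'v \<Rightarrow> 'v \<Rightarrow> complex" where
  "e_vec a = (\<lambda>x. if x = a then 1 else 0)"

definition pair_state :: "'v \<Rightarrow> 'v \<Rightarrow> 'v \<Rightarrow> complex" where
  "pair_state x y = (\<lambda>z. e_vec x z - e_vec y z)"

definition pair_PST :: "('v::finite \<Rightarrow> 'v \<Rightarrow> bool) \<Rightarrow> real \<Rightarrow> 'v \<Rightarrow> 'v \<Rightarrow> 'v \<Rightarrow> 'v \<Rightarrow> bool" where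
  "pair_PST E t x y z w \<longleftrightarrow>
     (\<exists>g::complex. cmod g = 1 \<and> mat_vec (U E t) (pair_state x y) = (\<lambda>v. g * pair_state z w v))"

definition vertex_PST :: "('v::finite \<Rightarrow> 'v \<Rightarrow> bool) \<Rightarrow> real \<Rightarrow> 'v \<Rightarrow> 'v \<Rightarrow> bool" where
  "vertex_PST E t a b \<longleftrightarrow>
     (\<exists>g::complex. cmod g = 1 \<and> mat_vec (U E t) (e_vec a) = (\<lambda>v. g * e_vec b v))"

end

theory Submission
  imports Defs
begin

(* The Laplacian of G \<box> H is L_G \<otimes> I + I \<otimes> L_H, a sum of two commuting matrices, so
   U_{G \<box> H}(t) = U_G(t) \<otimes> U_H(t). The initial pair state is e_a \<otimes> (e_\<alpha> - e_\<beta>), hence it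
   evolves into the product vector U_G(t) e_a \<otimes> U_H(t) (e_\<alpha> - e_\<beta>). Such a product equals a
   phase times e_b \<otimes> (e_\<gamma> - e_\<kappa>) iff its two factors are multiples of e_b and e_\<gamma> - e_\<kappa>;
   since U_G(t) is unitary, the first multiplier is a phase, and then so is the second. *)

(* Wrapping 'v mat in a type lets the Banach-algebra exponential of the library (exp,
   exp_add_commuting, exp_minus_inverse) act on matrices; mat_exp is shown to agree with it. *)
typedef ('v::finite) cmat = "UNIV :: 'v mat set" morphisms entries Cmat
  by simp

lemma entries_Cmat [simp]: "entries (Cmat M) = M"
  by (simp add: Cmat_inverse)

lemma cmat_eqI: "(\<And>i j. entries A i j = entries B i j) \<Longrightarrow> A = B"
  by (metis entries_inverse ext)

lemma mat_mult_assoc: "mat_mult (mat_mult A B) C = mat_mult A (mat_mult B C)"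
  unfolding mat_mult_def
  by (auto simp: sum_distrib_left sum_distrib_right mult.assoc intro!: ext sum.swap)

lemma mat_id_mult [simp]: "mat_mult mat_id A = A"
  by (simp add: mat_mult_def mat_id_def if_distrib[of "\<lambda>c. c * _"] cong: if_cong)

lemma mult_mat_id [simp]: "mat_mult A mat_id = A"
  by (simp add: mat_mult_def mat_id_def if_distrib cong: if_cong)

instantiation cmat :: (finite) ring_1
begin

definition "0 = Cmat (\<lambda>i j. 0)"
definition "1 = Cmat mat_id"
definition "A + B = Cmat (\<lambda>i j. entries A i j + entries B i j)"
definition "A - B = Cmat (\<lambda>i j. entries A i j - entries B i j)"
definition "- A = Cmat (\<lambda>i j. - entries A i j)"
definition "A * B = Cmat (mat_mult (entries A) (entries B))"

instance
proof
  fix a b c :: "'a cmat"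
  show "a * b * c = a * (b * c)"
    by (simp add: times_cmat_def mat_mult_assoc)
  show "(a + b) * c = a * c + b * c" "a * (b + c) = a * b + a * c"
    by (simp_all add: times_cmat_def plus_cmat_def mat_mult_def algebra_simps sum.distrib)
  show "1 * a = a" "a * 1 = a"
    by (simp_all add: times_cmat_def one_cmat_def entries_inverse)
  show "a + b + c = a + (b + c)" "a + b = b + a" "0 + a = a" "- a + a = 0" "a - b = a + - b"
    by (auto intro: cmat_eqI simp: plus_cmat_def zero_cmat_def uminus_cmat_def minus_cmat_def)
  have "entries (0::'a cmat) undefined undefined \<noteq> entries 1 undefined undefined"
    by (simp add: zero_cmat_def one_cmat_def mat_id_def)
  then show "(0::'a cmat) \<noteq> 1"
    by metis
qed

end

lemma entries_ring_simps [simp]: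
  "entries (A + B) i j = entries A i j + entries B i j"
  "entries (A - B) i j = entries A i j - entries B i j"
  "entries (- A) i j = - entries A i j"
  "entries 0 i j = 0"
  "entries 1 = mat_id"
  "entries (A * B) = mat_mult (entries A) (entries B)"
  by (simp_all add: plus_cmat_def minus_cmat_def uminus_cmat_def zero_cmat_def one_cmat_def times_cmat_def)

instantiation cmat :: (finite) real_vector
begin

definition "scaleR r A = Cmat (\<lambda>i j. r *\<^sub>R entries A i j)"

instance
  by standard (auto intro!: cmat_eqI simp: scaleR_cmat_def scaleR_add_right scaleR_add_left)

end

lemma entries_scaleR [simp]: "entries (r *\<^sub>R A) i j = r *\<^sub>R entries A i j"
  by (simp add: scaleR_cmat_def)

definition row_norm :: "'v::finite cmat \<Rightarrow> 'v \<Rightarrow> real" where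
  "row_norm A i = (\<Sum>j\<in>UNIV. cmod (entries A i j))"

instantiation cmat :: (finite) real_normed_vector
begin

definition "norm (A::'a cmat) = Max (range (row_norm A))"
definition "sgn (A::'a cmat) = A /\<^sub>R norm A"
definition "dist (A::'a cmat) B = norm (A - B)"
definition "(uniformity :: ('a cmat \<times> 'a cmat) filter) =
  (INF e\<in>{0 <..}. principal {(x, y). dist x y < e})"
definition "open (S :: 'a cmat set) \<longleftrightarrow>
  (\<forall>x\<in>S. eventually (\<lambda>(x', y). x' = x \<longrightarrow> y \<in> S) uniformity)"

lemma row_norm_le_norm: "row_norm A i \<le> norm A"
  unfolding norm_cmat_def by (rule Max_ge) auto

lemma norm_cmat_leI: "(\<And>i. row_norm A i \<le> c) \<Longrightarrow> norm A \<le> c"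
  unfolding norm_cmat_def by (subst Max_le_iff) auto

lemma norm_entry_le_norm: "cmod (entries A i j) \<le> norm A"
  using member_le_sum[of j UNIV "\<lambda>j. cmod (entries A i j)"] row_norm_le_norm[of A i]
  by (simp add: row_norm_def)

instance
proof
  fix r :: real and x y :: "'a cmat"
  show "norm x = 0 \<longleftrightarrow> x = 0"
  proof
    assume "norm x = 0"
    then show "x = 0"
      using norm_entry_le_norm[of x] by (intro cmat_eqI) (simp add: antisym)
  qed (simp add: norm_cmat_def row_norm_def)
  show "norm (x + y) \<le> norm x + norm y"
  proof (rule norm_cmat_leI)
    fix i
    have "row_norm (x + y) i \<le> row_norm x i + row_norm y i"
      unfolding row_norm_def sum.distrib[symmetric] by (intro sum_mono) (simp add: norm_triangle_ineq)
    then show "row_norm (x + y) i \<le> norm x + norm y"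
      using row_norm_le_norm[of x i] row_norm_le_norm[of y i] by linarith
  qed
  have "range (row_norm (r *\<^sub>R x)) = (\<lambda>s. \<bar>r\<bar> * s) ` range (row_norm x)"
    by (auto simp: row_norm_def sum_distrib_left image_image)
  then show "norm (r *\<^sub>R x) = \<bar>r\<bar> * norm x"
    unfolding norm_cmat_def
    by (simp add: mono_Max_commute[symmetric] mono_def mult_left_mono)
qed (rule sgn_cmat_def dist_cmat_def open_cmat_def uniformity_cmat_def)+

end

instance cmat :: (finite) real_normed_algebra_1
proof
  fix a b :: "'a cmat" and r :: real
  show "r *\<^sub>R a * b = r *\<^sub>R (a * b)" "a * r *\<^sub>R b = r *\<^sub>R (a * b)"
    by (auto intro: cmat_eqI simp: mat_mult_def scaleR_sum_right)
  show "norm (1::'a cmat) = 1"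
    by (simp add: norm_cmat_def row_norm_def mat_id_def if_distrib cong: if_cong)
  show "norm (a * b) \<le> norm a * norm b"
  proof (rule norm_cmat_leI)
    fix i
    have "row_norm (a * b) i \<le> (\<Sum>j\<in>UNIV. \<Sum>z\<in>UNIV. cmod (entries a i z) * cmod (entries b z j))"
      unfolding row_norm_def entries_ring_simps mat_mult_def
      by (intro sum_mono order.trans[OF norm_sum]) (simp add: norm_mult)
    also have "\<dots> = (\<Sum>z\<in>UNIV. cmod (entries a i z) * row_norm b z)"
      by (subst sum.swap) (simp add: row_norm_def sum_distrib_left)
    also have "\<dots> \<le> (\<Sum>z\<in>UNIV. cmod (entries a i z) * norm b)"
      by (intro sum_mono mult_left_mono row_norm_le_norm) auto
    also have "\<dots> = row_norm a i * norm b"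
      by (simp add: row_norm_def sum_distrib_right)
    also have "\<dots> \<le> norm a * norm b"
      by (intro mult_right_mono row_norm_le_norm) auto
    finally show "row_norm (a * b) i \<le> norm a * norm b" .
  qed
qed

lemma bounded_linear_entries: "bounded_linear (\<lambda>A::'v::finite cmat. entries A i j)"
  by (rule bounded_linear_intro[where K=1]) (auto simp: norm_entry_le_norm)

lemma norm_cmat_le_sum_entries: "norm (A::'v::finite cmat) \<le> (\<Sum>i\<in>UNIV. \<Sum>j\<in>UNIV. cmod (entries A i j))"
proof (rule norm_cmat_leI)
  fix i
  show "row_norm A i \<le> (\<Sum>i\<in>UNIV. \<Sum>j\<in>UNIV. cmod (entries A i j))"
    unfolding row_norm_def
    by (rule member_le_sum[of i UNIV "\<lambda>i. \<Sum>j\<in>UNIV. cmod (entries A i j)"]) (auto intro: sum_nonneg)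
qed

instance cmat :: (finite) banach
proof
  fix X :: "nat \<Rightarrow> 'a cmat"
  assume "Cauchy X"
  have "convergent (\<lambda>n. entries (X n) i j)" for i j
    using bounded_linear.Cauchy[OF bounded_linear_entries \<open>Cauchy X\<close>] Cauchy_convergent by blast
  then obtain L where L: "\<And>i j. (\<lambda>n. entries (X n) i j) \<longlonglongrightarrow> L i j"
    unfolding convergent_def by metis
  have "(\<lambda>n. X n - Cmat L) \<longlonglongrightarrow> 0"
  proof (rule Lim_null_comparison)
    show "\<forall>\<^sub>F n in sequentially. norm (X n - Cmat L) \<le> (\<Sum>i\<in>UNIV. \<Sum>j\<in>UNIV. cmod (entries (X n) i j - L i j))"
      using norm_cmat_le_sum_entries[of "X _ - Cmat L"] by simp
    show "(\<lambda>n. \<Sum>i\<in>UNIV. \<Sum>j\<in>UNIV. cmod (entries (X n) i j - L i j)) \<longlonglongrightarrow> 0"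
      by (intro tendsto_null_sum tendsto_norm_zero) (use L LIM_zero in blast)
  qed
  then show "convergent X"
    by (auto simp: convergent_def LIM_zero_iff)
qed

lemma entries_power: "entries (Cmat M ^ n) = mat_pow M n"
proof (induction n)
  case (Suc n)
  then show ?case
    by (simp only: power_Suc2 entries_ring_simps entries_Cmat mat_pow.simps)
qed simp

lemma mat_pow_Suc_left: "mat_pow M (Suc n) = mat_mult M (mat_pow M n)"
  by (simp only: entries_power[symmetric] power_Suc entries_ring_simps entries_Cmat)

lemma mat_pow_sums_exp_entry:
  "(\<lambda>n. mat_pow M n x y / of_nat (fact n)) sums entries (exp (Cmat M)) x y"
proof -
  have "(\<lambda>n. entries (Cmat M ^ n /\<^sub>R fact n) x y) sums entries (exp (Cmat M)) x y"
    by (rule bounded_linear.sums[OF bounded_linear_entries exp_converges])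
  then show ?thesis
    by (simp only: entries_scaleR entries_power) (simp add: scaleR_conv_of_real divide_inverse mult.commute)
qed

lemma mat_exp_eq_exp: "mat_exp M = entries (exp (Cmat M))"
  unfolding mat_exp_def by (intro ext sums_unique[symmetric] mat_pow_sums_exp_entry)

lemma mat_exp_sums: "(\<lambda>n. mat_pow M n x y / of_nat (fact n)) sums mat_exp M x y"
  unfolding mat_exp_eq_exp by (rule mat_pow_sums_exp_entry)

lemma mat_exp_add_commuting:
  assumes "mat_mult M N = mat_mult N M"
  shows "mat_exp (\<lambda>x y. M x y + N x y) = mat_mult (mat_exp M) (mat_exp N)"
proof -
  have sum: "Cmat (\<lambda>x y. M x y + N x y) = Cmat M + Cmat N"
    by (rule cmat_eqI) simp
  have "Cmat M * Cmat N = Cmat N * Cmat M"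
    by (rule cmat_eqI) (simp add: assms)
  then show ?thesis
    unfolding mat_exp_eq_exp sum by (simp add: exp_add_commuting)
qed

lemma mat_exp_uminus_mult: "mat_mult (mat_exp (\<lambda>x y. - M x y)) (mat_exp M) = mat_id"
proof -
  have "Cmat (\<lambda>x y. - M x y) = - Cmat M"
    by (rule cmat_eqI) simp
  moreover have "exp (- Cmat M) * exp (Cmat M) = 1"
    using exp_minus_inverse[of "- Cmat M"] by simp
  then have "entries (exp (- Cmat M) * exp (Cmat M)) = entries 1"
    by (rule arg_cong)
  ultimately show ?thesis
    unfolding mat_exp_eq_exp by simp
qed

definition mat_adjoint :: "'v mat \<Rightarrow> 'v mat" where
  "mat_adjoint M = (\<lambda>x y. cnj (M y x))"

lemma mat_adjoint_mult: "mat_adjoint (mat_mult A B) = mat_mult (mat_adjoint B) (mat_adjoint A)"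
  by (simp add: mat_adjoint_def mat_mult_def mult.commute)

lemma mat_adjoint_id [simp]: "mat_adjoint mat_id = mat_id"
  by (auto simp: mat_adjoint_def mat_id_def intro!: ext)

lemma mat_pow_adjoint: "mat_pow (mat_adjoint M) n = mat_adjoint (mat_pow M n)"
proof (induction n)
  case (Suc n)
  have "mat_pow (mat_adjoint M) (Suc n) = mat_mult (mat_adjoint (mat_pow M n)) (mat_adjoint M)"
    by (simp add: Suc)
  also have "\<dots> = mat_adjoint (mat_pow M (Suc n))"
    by (simp only: mat_adjoint_mult mat_pow_Suc_left)
  finally show ?case .
qed simp

lemma mat_exp_adjoint: "mat_exp (mat_adjoint M) = mat_adjoint (mat_exp M)"
proof (intro ext)
  fix x y
  have "(\<lambda>n. cnj (mat_pow M n y x / of_nat (fact n))) sums cnj (mat_exp M y x)"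
    by (rule sums_cnj[THEN iffD2, OF mat_exp_sums])
  then have "(\<lambda>n. mat_pow (mat_adjoint M) n x y / of_nat (fact n)) sums mat_adjoint (mat_exp M) x y"
    unfolding mat_pow_adjoint by (simp add: mat_adjoint_def)
  then show "mat_exp (mat_adjoint M) x y = mat_adjoint (mat_exp M) x y"
    using mat_exp_sums sums_unique2 by metis
qed

lemma mat_exp_skew_hermitian_unitary:
  assumes "mat_adjoint M = (\<lambda>x y. - M x y)"
  shows "mat_mult (mat_adjoint (mat_exp M)) (mat_exp M) = mat_id"
  by (simp add: mat_exp_adjoint[symmetric] assms mat_exp_uminus_mult)

definition kron :: "'a mat \<Rightarrow> 'b mat \<Rightarrow> ('a \<times> 'b) mat" where
  "kron A B = (\<lambda>p q. A (fst p) (fst q) * B (snd p) (snd q))"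

definition tensor_vec :: "('a \<Rightarrow> complex) \<Rightarrow> ('b \<Rightarrow> complex) \<Rightarrow> 'a \<times> 'b \<Rightarrow> complex" where
  "tensor_vec u w = (\<lambda>z. u (fst z) * w (snd z))"

lemma sum_UNIV_prod:
  "(\<Sum>z\<in>(UNIV::('a::finite \<times> 'b::finite) set). f z) = (\<Sum>x\<in>UNIV. \<Sum>y\<in>UNIV. f (x, y))"
  by (simp add: sum.cartesian_product)

lemma kron_mult:
  fixes A C :: "'a::finite mat" and B D :: "'b::finite mat"
  shows "mat_mult (kron A B) (kron C D) = kron (mat_mult A C) (mat_mult B D)"
  by (auto intro!: ext simp: mat_mult_def kron_def sum_UNIV_prod sum_product mult_ac)

lemma kron_id [simp]: "kron mat_id mat_id = mat_id"
  by (auto intro!: ext simp: kron_def mat_id_def prod_eq_iff)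

lemma mat_pow_id [simp]: "mat_pow mat_id n = mat_id"
  by (induction n) simp_all

lemma mat_pow_kron:
  fixes A :: "'a::finite mat" and B :: "'b::finite mat"
  shows "mat_pow (kron A B) n = kron (mat_pow A n) (mat_pow B n)"
  by (induction n) (simp_all add: kron_mult)

lemma mat_exp_kron_id_right:
  fixes A :: "'a::finite mat"
  shows "mat_exp (kron A mat_id) = kron (mat_exp A) (mat_id :: 'b::finite mat)"
proof (intro ext)
  fix p q :: "'a \<times> 'b"
  have "(\<lambda>n. mat_pow A n (fst p) (fst q) / of_nat (fact n) * mat_id (snd p) (snd q))
      sums (mat_exp A (fst p) (fst q) * mat_id (snd p) (snd q))"
    by (rule sums_mult2[OF mat_exp_sums])
  then have "(\<lambda>n. mat_pow (kron A mat_id) n p q / of_nat (fact n)) sums kron (mat_exp A) mat_id p q"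
    unfolding mat_pow_kron mat_pow_id by (simp add: kron_def)
  then show "mat_exp (kron A mat_id) p q = kron (mat_exp A) mat_id p q"
    using mat_exp_sums sums_unique2 by metis
qed

lemma mat_exp_kron_id_left:
  fixes B :: "'b::finite mat"
  shows "mat_exp (kron mat_id B) = kron (mat_id :: 'a::finite mat) (mat_exp B)"
proof (intro ext)
  fix p q :: "'a \<times> 'b"
  have "(\<lambda>n. mat_id (fst p) (fst q) * (mat_pow B n (snd p) (snd q) / of_nat (fact n)))
      sums (mat_id (fst p) (fst q) * mat_exp B (snd p) (snd q))"
    by (rule sums_mult[OF mat_exp_sums])
  then have "(\<lambda>n. mat_pow (kron mat_id B) n p q / of_nat (fact n)) sums kron mat_id (mat_exp B) p q"
    unfolding mat_pow_kron mat_pow_id by (simp add: kron_def)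
  then show "mat_exp (kron mat_id B) p q = kron mat_id (mat_exp B) p q"
    using mat_exp_sums sums_unique2 by metis
qed

lemma mat_vec_kron_tensor_vec:
  fixes A :: "'a::finite mat" and B :: "'b::finite mat"
  shows "mat_vec (kron A B) (tensor_vec u w) = tensor_vec (mat_vec A u) (mat_vec B w)"
  by (auto intro!: ext simp: mat_vec_def kron_def tensor_vec_def sum_UNIV_prod sum_product mult_ac)

lemma card_neighbours_cart_prod:
  fixes G :: "'a::finite \<Rightarrow> 'a \<Rightarrow> bool" and H :: "'b::finite \<Rightarrow> 'b \<Rightarrow> bool"
  assumes "simple_graph G"
  shows "card {z. cart_prod G H (x, y) z} = card {u. G x u} + card {w. H y w}"
proof -
  have neighbours: "{z. cart_prod G H (x, y) z} = Pair x ` {w. H y w} \<union> (\<lambda>u. (u, y)) ` {u. G x u}"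
    by (auto simp: cart_prod_def)
  have "Pair x ` {w. H y w} \<inter> (\<lambda>u. (u, y)) ` {u. G x u} = {}"
    using assms by (auto simp: simple_graph_def)
  then show ?thesis
    unfolding neighbours by (subst card_Un_disjoint) (auto simp: card_image inj_on_def)
qed

lemma laplacian_cart_prod:
  fixes G :: "'a::finite \<Rightarrow> 'a \<Rightarrow> bool" and H :: "'b::finite \<Rightarrow> 'b \<Rightarrow> bool"
  assumes "simple_graph G" and "simple_graph H"
  shows "laplacian (cart_prod G H) = (\<lambda>p q. kron (laplacian G) mat_id p q + kron mat_id (laplacian H) p q)"
proof (intro ext)
  fix p q :: "'a \<times> 'b"
  obtain x y x' y' where "p = (x, y)" and "q = (x', y')"
    by fastforce
  moreover have "\<not> G x x" and "\<not> H y y"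
    using assms by (auto simp: simple_graph_def)
  ultimately show "laplacian (cart_prod G H) p q = kron (laplacian G) mat_id p q + kron mat_id (laplacian H) p q"
    by (auto simp: laplacian_def kron_def mat_id_def cart_prod_def card_neighbours_cart_prod[OF assms(1)])
qed

lemma U_cart_prod:
  fixes G :: "'a::finite \<Rightarrow> 'a \<Rightarrow> bool" and H :: "'b::finite \<Rightarrow> 'b \<Rightarrow> bool"
  assumes "simple_graph G" and "simple_graph H"
  shows "U (cart_prod G H) t = kron (U G t) (U H t)"
proof -
  define MG where "MG = (\<lambda>x y. \<i> * complex_of_real t * laplacian G x y)"
  define MH where "MH = (\<lambda>x y. \<i> * complex_of_real t * laplacian H x y)"
  have "(\<lambda>p q. \<i> * complex_of_real t * laplacian (cart_prod G H) p q)
      = (\<lambda>p q. kron MG mat_id p q + kron mat_id MH p q)"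
    by (simp add: laplacian_cart_prod[OF assms] kron_def MG_def MH_def algebra_simps)
  moreover have "mat_mult (kron MG mat_id) (kron mat_id MH) = mat_mult (kron mat_id MH) (kron MG mat_id)"
    by (simp add: kron_mult)
  ultimately have "U (cart_prod G H) t = mat_mult (mat_exp (kron MG mat_id)) (mat_exp (kron mat_id MH))"
    unfolding U_def by (simp add: mat_exp_add_commuting)
  also have "\<dots> = kron (U G t) (U H t)"
    by (simp add: mat_exp_kron_id_right mat_exp_kron_id_left kron_mult U_def MG_def MH_def)
  finally show ?thesis .
qed

lemma U_unitary:
  assumes "simple_graph E"
  shows "mat_mult (mat_adjoint (U E t)) (U E t) = mat_id"
  unfolding U_def
proof (rule mat_exp_skew_hermitian_unitary)
  show "mat_adjoint (\<lambda>x y. \<i> * complex_of_real t * laplacian E x y)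
      = (\<lambda>x y. - (\<i> * complex_of_real t * laplacian E x y))"
    using assms by (auto intro!: ext simp: mat_adjoint_def laplacian_def simple_graph_def)
qed

lemma mat_vec_e_vec: "mat_vec A (e_vec a) = (\<lambda>x. A x a)"
  by (simp add: mat_vec_def e_vec_def if_distrib[of "\<lambda>c. _ * c"] cong: if_cong)

lemma unitary_column_norm:
  assumes "mat_mult (mat_adjoint A) A = mat_id"
  shows "(\<Sum>x\<in>UNIV. (cmod (mat_vec A (e_vec a) x))\<^sup>2) = 1"
proof -
  have "complex_of_real (\<Sum>x\<in>UNIV. (cmod (A x a))\<^sup>2) = mat_mult (mat_adjoint A) A a a"
    by (simp only: of_real_sum complex_norm_square) (simp add: mat_mult_def mat_adjoint_def mult.commute)
  also have "\<dots> = 1"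
    using assms by (simp add: mat_id_def)
  finally show ?thesis
    unfolding mat_vec_e_vec by (simp only: of_real_eq_1_iff)
qed

definition equal_up_to_phase :: "('v \<Rightarrow> complex) \<Rightarrow> ('v \<Rightarrow> complex) \<Rightarrow> bool" where
  "equal_up_to_phase u v \<longleftrightarrow> (\<exists>g. cmod g = 1 \<and> u = (\<lambda>x. g * v x))"

lemma tensor_vec_eq_multiple_of_e_vec_tensor:
  assumes eq: "tensor_vec u w = (\<lambda>z. g * tensor_vec (e_vec b) q z)"
    and "g \<noteq> 0" and "q \<gamma> \<noteq> 0"
  shows "u b \<noteq> 0" and "u = (\<lambda>x. u b * e_vec b x)" and "w = (\<lambda>y. g / u b * q y)"
proof -
  have entry: "u x * w y = g * (e_vec b x * q y)" for x y
    using fun_cong[OF eq, of "(x, y)"] by (simp add: tensor_vec_def)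
  then have "u b * w \<gamma> \<noteq> 0"
    using assms(2,3) by (simp add: e_vec_def)
  then have "w \<gamma> \<noteq> 0"
    by simp
  show "u b \<noteq> 0"
    using \<open>u b * w \<gamma> \<noteq> 0\<close> by simp
  show "u = (\<lambda>x. u b * e_vec b x)"
  proof
    fix x
    show "u x = u b * e_vec b x"
      using entry[of x \<gamma>] \<open>w \<gamma> \<noteq> 0\<close> by (cases "x = b") (simp_all add: e_vec_def)
  qed
  show "w = (\<lambda>y. g / u b * q y)"
    using entry[of b] \<open>u b \<noteq> 0\<close> by (auto simp: e_vec_def field_simps)
qed

lemma tensor_vec_equal_up_to_phase_iff:
  fixes u :: "'a::finite \<Rightarrow> complex"
  assumes "q \<gamma> \<noteq> 0" and unit: "(\<Sum>x\<in>UNIV. (cmod (u x))\<^sup>2) = 1"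
  shows "equal_up_to_phase (tensor_vec u w) (tensor_vec (e_vec b) q)
    \<longleftrightarrow> equal_up_to_phase u (e_vec b) \<and> equal_up_to_phase w q"
proof
  assume "equal_up_to_phase (tensor_vec u w) (tensor_vec (e_vec b) q)"
  then obtain g where "cmod g = 1" and eq: "tensor_vec u w = (\<lambda>z. g * tensor_vec (e_vec b) q z)"
    unfolding equal_up_to_phase_def by blast
  then have "g \<noteq> 0"
    by auto
  note factors = tensor_vec_eq_multiple_of_e_vec_tensor[OF eq this \<open>q \<gamma> \<noteq> 0\<close>]
  have "(\<lambda>x. (cmod (u x))\<^sup>2) = (\<lambda>x. if x = b then (cmod (u b))\<^sup>2 else 0)"
    by (subst factors(2)) (auto simp: e_vec_def)
  then have "(\<Sum>x\<in>UNIV. (cmod (u x))\<^sup>2) = (cmod (u b))\<^sup>2"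
    by (simp only:) simp
  then have "cmod (u b) = 1"
    using unit by (simp add: abs_square_eq_1)
  then show "equal_up_to_phase u (e_vec b) \<and> equal_up_to_phase w q"
    using factors \<open>cmod g = 1\<close> unfolding equal_up_to_phase_def by (metis norm_divide div_by_1)
next
  assume "equal_up_to_phase u (e_vec b) \<and> equal_up_to_phase w q"
  then obtain g1 g2 where "cmod g1 = 1" "u = (\<lambda>x. g1 * e_vec b x)" "cmod g2 = 1" "w = (\<lambda>y. g2 * q y)"
    unfolding equal_up_to_phase_def by blast
  then show "equal_up_to_phase (tensor_vec u w) (tensor_vec (e_vec b) q)"
    unfolding equal_up_to_phase_def
    by (intro exI[of _ "g1 * g2"]) (auto simp: tensor_vec_def norm_mult mult_ac)
qed

lemma pair_state_eq_tensor_vec: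
  "pair_state (a, \<alpha>) (a, \<beta>) = tensor_vec (e_vec a) (pair_state \<alpha> \<beta>)"
  by (auto simp: pair_state_def e_vec_def tensor_vec_def)

theorem mainTheorem3:
  fixes G :: "'a::finite \<Rightarrow> 'a \<Rightarrow> bool" and H :: "'b::finite \<Rightarrow> 'b \<Rightarrow> bool"
    and a b :: 'a and \<alpha> \<beta> \<gamma> \<kappa> :: 'b and t :: real
  assumes "simple_graph G" and "simple_graph H"
    and "\<alpha> \<noteq> \<beta>" and "\<gamma> \<noteq> \<kappa>"
  shows "pair_PST (cart_prod G H) t (a, \<alpha>) (a, \<beta>) (b, \<gamma>) (b, \<kappa>)
     \<longleftrightarrow> vertex_PST G t a b \<and> pair_PST H t \<alpha> \<beta> \<gamma> \<kappa>"
proof -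
  have "pair_state \<gamma> \<kappa> \<gamma> \<noteq> 0"
    using \<open>\<gamma> \<noteq> \<kappa>\<close> by (simp add: pair_state_def e_vec_def)
  moreover have "(\<Sum>x\<in>UNIV. (cmod (mat_vec (U G t) (e_vec a) x))\<^sup>2) = 1"
    using U_unitary[OF \<open>simple_graph G\<close>] by (rule unitary_column_norm)
  moreover have "mat_vec (U (cart_prod G H) t) (pair_state (a, \<alpha>) (a, \<beta>))
      = tensor_vec (mat_vec (U G t) (e_vec a)) (mat_vec (U H t) (pair_state \<alpha> \<beta>))"
    unfolding U_cart_prod[OF assms(1,2)] pair_state_eq_tensor_vec by (rule mat_vec_kron_tensor_vec)
  ultimately show ?thesis
    unfolding pair_PST_def vertex_PST_def equal_up_to_phase_def[symmetric] pair_state_eq_tensor_vec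
    by (simp add: tensor_vec_equal_up_to_phase_iff)
qed

end
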